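(* Let $L\in\{1,2,\dots,q-1\}$. Every $L$-MDS code over $F=\mathrm{GF}(q)$ is MDS.
   Context: $\mathsf w(\cdot)$ denotes Hamming weight. For $L\in\mathbb Z^+$ and nonnegative $\tau\in\frac{1}{L+1}\mathbb Z$, a code $\mathcal C\subseteq F^n$ is strongly-$(\tau,L)$-list decodable if there do not exist $y\in F^n$ and $L+1$ distinct codewords $c_0,\dots,c_L\in\mathcal C$ with $\sum_{m=0}^{L}\mathsf w(y-c_m)\le(L+1)\tau$. A linear $[n,k]$ code over $F$ is called $L$-MDS if it is strongly-$\left(\frac{L(n-k)}{L+1},L\right)$-list decodable; equivalently, any $L+1$ distinct vectors lying in a common coset of the code have total Hamming weight greater than $L(n-k)$. *)

theory Defs
  imports "HOL-Analysis.Analysis"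
begin

text \<open>Vectors of F^n are modelled as elements of type 'a ^ 'n, with n = CARD('n).
  A linear [n,k] code is a subspace C (w.r.t. scalar multiplication *s) with vec.dim C = k.\<close>

definition hw :: "'a::zero ^ 'n \<Rightarrow> nat" where
  "hw x = card {i. x $ i \<noteq> 0}"

definition linear_code :: "('a::field ^ 'n) set \<Rightarrow> nat \<Rightarrow> bool" where
  "linear_code C k \<longleftrightarrow> vec.subspace C \<and> vec.dim C = k"

definition strongly_list_decodable ::
    "('a::ab_group_add ^ 'n) set \<Rightarrow> real \<Rightarrow> nat \<Rightarrow> bool" where
  "strongly_list_decodable C \<tau> L \<longleftrightarrow>
     \<not> (\<exists>y c. inj_on c {0..L} \<and> c ` {0..L} \<subseteq> C \<and>
            real (\<Sum>m\<in>{0..L}. hw (y - c m)) \<le> (real L + 1) * \<tau>)"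

definition L_MDS :: "('a::field ^ 'n) set \<Rightarrow> nat \<Rightarrow> nat \<Rightarrow> bool" where
  "L_MDS C k L \<longleftrightarrow> linear_code C k \<and>
     strongly_list_decodable C (real L * (real CARD('n) - real k) / (real L + 1)) L"

text \<open>MDS: minimum distance n - k + 1, i.e. every nonzero codeword has weight at least n - k + 1
  (the reverse inequality is the Singleton bound).\<close>
definition MDS :: "('a::field ^ 'n) set \<Rightarrow> nat \<Rightarrow> bool" where
  "MDS C k \<longleftrightarrow> linear_code C k \<and>
     (\<forall>c\<in>C. c \<noteq> 0 \<longrightarrow> CARD('n) - k + 1 \<le> hw c)"

end

theory Submission
  imports Defs
begin

text \<open>Let \<open>c\<close> be a nonzero codeword and \<open>a\<^sub>0, \<dots>, a\<^sub>L\<close> distinct scalars,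
  which exist because \<open>L < q\<close>. The codewords \<open>a\<^sub>m c\<close> are distinct, and their distances
  to \<open>y = a\<^sub>0 c\<close> add up to \<open>L w(c)\<close>. Hence \<open>L\<close>-MDS forces \<open>L w(c) > L (n - k)\<close>,
  i.e. \<open>w(c) \<ge> n - k + 1\<close>.\<close>

lemma hw_pos: "x \<noteq> 0 \<Longrightarrow> 0 < hw x"
  by (auto simp: hw_def card_gt_0_iff vec_eq_iff)

lemma hw_scale:
  fixes x :: "'a::field ^ 'n"
  assumes "a \<noteq> 0"
  shows "hw (a *s x) = hw x"
  using assms by (simp add: hw_def)

lemma strongly_list_decodable_weight_bound:
  fixes C :: "('a::{field,finite} ^ 'n) set"
  assumes "vec.subspace C" and "strongly_list_decodable C \<tau> L" and "L < CARD('a)"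
    and "c \<in> C" and "c \<noteq> 0"
  shows "(real L + 1) * \<tau> < real (L * hw c)"
proof -
  obtain a :: "nat \<Rightarrow> 'a" where inj_a: "inj_on a {0..L}"
    using card_le_inj[of "{0..L}" "UNIV :: 'a set"] assms(3) by auto
  define cw where "cw m = a m *s c" for m
  have inj_cw: "inj_on cw {0..L}"
  proof (rule inj_onI)
    fix m m' assume "m \<in> {0..L}" "m' \<in> {0..L}" "cw m = cw m'"
    moreover obtain i where "c $ i \<noteq> 0"
      using assms(5) by (auto simp: vec_eq_iff)
    ultimately show "m = m'"
      using inj_a by (auto simp: cw_def vec_eq_iff dest: inj_onD)
  qed
  have cw_C: "cw ` {0..L} \<subseteq> C"
    using assms(1,4) by (auto simp: cw_def vec.subspace_scale)
  have dist: "hw (cw 0 - cw m) = (if m = 0 then 0 else hw c)" if "m \<in> {0..L}" for m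
  proof (cases "m = 0")
    case False
    then have "a 0 - a m \<noteq> 0"
      using inj_a that by (auto dest: inj_onD)
    then show ?thesis
      using False by (simp add: cw_def hw_scale flip: vector_sub_rdistrib)
  qed (simp add: hw_def)
  have "(\<Sum>m\<in>{0..L}. hw (cw 0 - cw m)) = (\<Sum>m\<in>{0..L}. if m = 0 then 0 else hw c)"
    using dist by (rule sum.cong[OF refl])
  also have "\<dots> = (\<Sum>m\<in>{1..L}. hw c)"
    by (rule sum.mono_neutral_cong_right) auto
  finally have "(\<Sum>m\<in>{0..L}. hw (cw 0 - cw m)) = L * hw c"
    by simp
  then show ?thesis
    using assms(2) inj_cw cw_C unfolding strongly_list_decodable_def by (metis not_le)
qed

theorem mainTheorem8:
  fixes C :: "('a::{field,finite} ^ 'n) set" and k L :: nat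
  assumes "1 \<le> L" and "L \<le> CARD('a) - 1"
    and "L_MDS C k L"
  shows "MDS C k"
  unfolding MDS_def
proof (intro conjI ballI impI)
  show "linear_code C k"
    using assms(3) by (simp add: L_MDS_def)
  have sub: "vec.subspace C"
    and decodable: "strongly_list_decodable C (real L * (real CARD('n) - real k) / (real L + 1)) L"
    using assms(3) by (simp_all add: L_MDS_def linear_code_def)
  have "L < CARD('a)"
    using assms(2) zero_less_card_finite[where 'a='a] by linarith
  fix c assume "c \<in> C" and "c \<noteq> 0"
  with sub decodable \<open>L < CARD('a)\<close>
  have "(real L + 1) * (real L * (real CARD('n) - real k) / (real L + 1)) < real (L * hw c)"
    by (rule strongly_list_decodable_weight_bound)
  then have "real L * (real CARD('n) - real k) < real L * real (hw c)"
    by (simp add: add_pos_nonneg)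
  then have "real CARD('n) - real k < real (hw c)"
    using assms(1) by (simp add: mult_less_cancel_left)
  with hw_pos[OF \<open>c \<noteq> 0\<close>] show "CARD('n) - k + 1 \<le> hw c"
    by (cases "k \<le> CARD('n)") (auto simp: of_nat_diff)
qed

end
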